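(* For $R>0$ let $D_R=\{(a,b,c,d)\in\mathbb{R}^4:\ ad-bc>0,\ (a+d)^2+(b-c)^2\le R^2\}$, and for $(a,b,c,d)\in D_R$ let $k(a,b,c,d)$ denote the deformation coefficient of the operator with matrix $\begin{pmatrix}a&b\\c&d\end{pmatrix}$. Then for every $R>0$ $$\overline{k}_2:=\frac{1}{\operatorname{vol}(D_R)}\int_{D_R}k(a,b,c,d)\,da\,db\,dc\,dd=3-4\ln 2\approx 0.2274.$$
   Context: A non-degenerate linear operator $\varphi$ on $\mathbb{R}^2$ maps the unit circle onto an ellipse; let $p\ge q>0$ be the lengths of its semi-axes. The deformation coefficient is $k(\varphi)=q/p$. The volume and integral are with respect to Lebesgue measure on $\mathbb{R}^4$. *)

theory Defs
  imports "HOL-Analysis.Analysis"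
begin

text \<open>The image of the unit circle is an ellipse centred at 0; its semi-axes are
  the maximal and minimal distance from the centre to the ellipse.\<close>

definition major_semiaxis :: "real^2^2 \<Rightarrow> real" where
  "major_semiaxis A = (SUP x\<in>sphere (0::real^2) 1. norm (A *v x))"

definition minor_semiaxis :: "real^2^2 \<Rightarrow> real" where
  "minor_semiaxis A = (INF x\<in>sphere (0::real^2) 1. norm (A *v x))"

definition deformation_coeff :: "real^2^2 \<Rightarrow> real" where
  "deformation_coeff A = minor_semiaxis A / major_semiaxis A"

text \<open>Matrix (a b; c d) has a = A$1$1, b = A$1$2, c = A$2$1, d = A$2$2.\<close>

definition D_set :: "real \<Rightarrow> (real^2^2) set" where
  "D_set R = {A. A$1$1 * A$2$2 - A$1$2 * A$2$1 > 0 \<and>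
                 (A$1$1 + A$2$2)^2 + (A$1$2 - A$2$1)^2 \<le> R^2}"

end

theory Submission
  imports Defs
begin

text \<open>Identify \<open>\<real>\<^sup>2\<close> with \<open>\<complex>\<close>. A real matrix \<open>A\<close> then acts as
  \<open>X \<mapsto> z X + w cnj X\<close>, so the semi-axes of the image of the unit circle are \<open>|z| + |w|\<close>
  and \<open>|z| - |w|\<close>, the determinant is \<open>|z|\<^sup>2 - |w|\<^sup>2\<close>, and \<open>D\<^sub>R\<close> becomes
  \<open>{|w| < |z|, 2|z| \<le> R}\<close>. On \<open>D\<^sub>R\<close> the deformation coefficient exceeds \<open>t\<close> exactly
  when \<open>|w| < c |z|\<close> with \<open>c = (1 - t) / (1 + t)\<close>; the linear map \<open>(z, w) \<mapsto> (z, c w)\<close>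
  has determinant \<open>c\<^sup>2\<close>, so this superlevel set has volume \<open>c\<^sup>2 vol D\<^sub>R\<close>. By the
  layer-cake formula the mean of \<open>k\<close> over \<open>D\<^sub>R\<close> is therefore
  \<open>\<integral>\<^sub>0\<^sup>1 ((1 - t) / (1 + t))\<^sup>2 dt = 3 - 4 ln 2\<close>.\<close>

section \<open>Semi-axes in terms of the complex form\<close>

lemma norm_mult_add_mult_cnj_attains:
  fixes z w :: complex and e :: real
  assumes "\<bar>e\<bar> = 1" and "0 \<le> cmod z + e * cmod w"
  shows "\<exists>X. cmod X = 1 \<and> cmod (z * X + w * cnj X) = cmod z + e * cmod w"
proof (cases "z = 0 \<or> w = 0")
  case True
  then show ?thesis
    using assms by (intro exI[of _ 1]) (auto simp: abs_if split: if_splits)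
next
  case False
  \<comment> \<open>\<open>X\<close> makes \<open>w * cnj X\<close> the real multiple \<open>e |w| / |z|\<close> of \<open>z * X\<close>.\<close>
  define X where "X = csqrt (of_real e * sgn w * cnj (sgn z))"
  have unit: "cmod X = 1"
    using False assms(1) by (simp add: X_def norm_mult norm_sgn)
  have unit_cnj: "u * cnj u = 1" if "cmod u = 1" for u
    using complex_norm_square[of u] that by simp
  have XX: "X * X = of_real e * sgn w * cnj (sgn z)"
    unfolding X_def by (metis power2_csqrt power2_eq_square)
  have "e * e = 1"
    using abs_mult_self_eq[of e] assms(1) by simp
  then have ee: "of_real e * of_real e = (1::complex)"
    by (metis of_real_1 of_real_mult)
  have w: "of_real (cmod w) * sgn w = w"
    by (simp add: sgn_eq)
  have "of_real e * of_real (cmod w) * sgn z * X * X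
      = (of_real e * of_real e) * (of_real (cmod w) * sgn w) * (sgn z * cnj (sgn z))"
    by (simp add: XX mult.assoc mult.left_commute)
  also have "\<dots> = w * cnj X * X"
    using ee w unit_cnj[OF unit] unit_cnj[of "sgn z"] False
    by (simp add: norm_sgn mult.assoc mult.commute[of "cnj X"])
  finally have "w * cnj X = of_real e * of_real (cmod w) * sgn z * X"
    using unit by auto
  then have "z * X + w * cnj X = of_real (cmod z + e * cmod w) * (sgn z * X)"
    by (simp add: sgn_eq algebra_simps)
  then show ?thesis
    using unit assms(2) False by (intro exI[of _ X]) (simp only: norm_mult norm_sgn norm_of_real, simp)
qed

lemma SUP_unit_circle_norm_mult_add_mult_cnj:
  "(SUP X\<in>sphere 0 1. cmod (z * X + w * cnj X)) = cmod z + cmod w"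
proof (rule cSup_eq_maximum)
  obtain X where "cmod X = 1" "cmod (z * X + w * cnj X) = cmod z + 1 * cmod w"
    using norm_mult_add_mult_cnj_attains[of 1 z w] by auto
  then show "cmod z + cmod w \<in> (\<lambda>X. cmod (z * X + w * cnj X)) ` sphere 0 1"
    by (intro image_eqI[of _ _ X]) auto
next
  fix y assume "y \<in> (\<lambda>X. cmod (z * X + w * cnj X)) ` sphere 0 1"
  then obtain X where "cmod X = 1" "y = cmod (z * X + w * cnj X)"
    by auto
  then show "y \<le> cmod z + cmod w"
    using norm_triangle_ineq[of "z * X" "w * cnj X"] by (simp add: norm_mult)
qed

lemma INF_unit_circle_norm_mult_add_mult_cnj:
  assumes "cmod w \<le> cmod z"
  shows "(INF X\<in>sphere 0 1. cmod (z * X + w * cnj X)) = cmod z - cmod w"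
proof (rule cInf_eq_minimum)
  obtain X where "cmod X = 1" "cmod (z * X + w * cnj X) = cmod z + (-1) * cmod w"
    using norm_mult_add_mult_cnj_attains[of "-1" z w] assms by auto
  then show "cmod z - cmod w \<in> (\<lambda>X. cmod (z * X + w * cnj X)) ` sphere 0 1"
    by (intro image_eqI[of _ _ X]) auto
next
  fix y assume "y \<in> (\<lambda>X. cmod (z * X + w * cnj X)) ` sphere 0 1"
  then obtain X where "cmod X = 1" "y = cmod (z * X + w * cnj X)"
    by auto
  then show "cmod z - cmod w \<le> y"
    using norm_diff_ineq[of "z * X" "w * cnj X"] by (simp add: norm_mult)
qed

definition complex_of_vec2 :: "real^2 \<Rightarrow> complex" where
  "complex_of_vec2 x = Complex (x$1) (x$2)"

lemma norm_complex_of_vec2 [simp]: "cmod (complex_of_vec2 x) = norm x"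
  by (simp add: complex_of_vec2_def cmod_def norm_vec_def L2_set_def sum_2)

lemma complex_of_vec2_sphere: "complex_of_vec2 ` sphere 0 1 = sphere 0 1"
proof (intro subset_antisym subsetI)
  fix X :: complex assume "X \<in> sphere 0 1"
  moreover have "X = complex_of_vec2 (vector [Re X, Im X])"
    by (simp add: complex_of_vec2_def)
  ultimately show "X \<in> complex_of_vec2 ` sphere 0 1"
    by (metis (no_types) image_eqI mem_sphere_0 norm_complex_of_vec2)
qed auto

definition lin_coeff :: "real^2^2 \<Rightarrow> complex" where
  "lin_coeff A = Complex ((A$1$1 + A$2$2) / 2) ((A$2$1 - A$1$2) / 2)"

definition antilin_coeff :: "real^2^2 \<Rightarrow> complex" where
  "antilin_coeff A = Complex ((A$1$1 - A$2$2) / 2) ((A$1$2 + A$2$1) / 2)"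

lemma complex_of_vec2_matrix_vector_mult:
  "complex_of_vec2 (A *v x) = lin_coeff A * complex_of_vec2 x + antilin_coeff A * cnj (complex_of_vec2 x)"
  by (simp add: complex_eq_iff complex_of_vec2_def lin_coeff_def antilin_coeff_def
      matrix_vector_mult_def sum_2 field_simps)

lemma norm_matrix_vector_mult_image_sphere:
  "(\<lambda>x. norm (A *v x)) ` sphere 0 1
     = (\<lambda>X. cmod (lin_coeff A * X + antilin_coeff A * cnj X)) ` sphere 0 1"
  by (simp flip: complex_of_vec2_sphere norm_complex_of_vec2
      add: image_image complex_of_vec2_matrix_vector_mult)

lemma major_semiaxis_eq: "major_semiaxis A = cmod (lin_coeff A) + cmod (antilin_coeff A)"
  by (simp add: major_semiaxis_def norm_matrix_vector_mult_image_sphere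
      SUP_unit_circle_norm_mult_add_mult_cnj)

lemma minor_semiaxis_eq:
  "cmod (antilin_coeff A) \<le> cmod (lin_coeff A) \<Longrightarrow>
   minor_semiaxis A = cmod (lin_coeff A) - cmod (antilin_coeff A)"
  by (simp add: minor_semiaxis_def norm_matrix_vector_mult_image_sphere
      INF_unit_circle_norm_mult_add_mult_cnj)

lemma det2_eq_norm_coeffs:
  "A$1$1 * A$2$2 - A$1$2 * A$2$1 = (cmod (lin_coeff A))\<^sup>2 - (cmod (antilin_coeff A))\<^sup>2"
  by (simp add: cmod_power2 lin_coeff_def antilin_coeff_def) (simp add: power2_eq_square field_simps)

lemma entries_sum_squares_eq_norm_lin_coeff:
  "(A$1$1 + A$2$2)\<^sup>2 + (A$1$2 - A$2$1)\<^sup>2 = (2 * cmod (lin_coeff A))\<^sup>2"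
  by (simp add: power_mult_distrib cmod_power2 lin_coeff_def) (simp add: power2_eq_square field_simps)

section \<open>Volumes of the cone regions\<close>

definition cone_region :: "('a \<Rightarrow> complex) \<Rightarrow> ('a \<Rightarrow> complex) \<Rightarrow> real \<Rightarrow> real \<Rightarrow> 'a set" where
  "cone_region z w R c = {x. cmod (w x) < c * cmod (z x) \<and> 2 * cmod (z x) \<le> R}"

lemma D_set_eq_cone_region: "D_set R = cone_region lin_coeff antilin_coeff \<bar>R\<bar> 1"
proof -
  have "0 < (cmod z)\<^sup>2 - (cmod w)\<^sup>2 \<longleftrightarrow> cmod w < cmod z" for z w :: complex
    using power_strict_mono[of "cmod w" "cmod z" 2] power_less_imp_less_base[of "cmod w" 2 "cmod z"]
    by auto
  moreover have "(2 * cmod z)\<^sup>2 \<le> R\<^sup>2 \<longleftrightarrow> 2 * cmod z \<le> \<bar>R\<bar>" for z :: complex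
    using abs_le_square_iff[of "2 * cmod z" R] by simp
  ultimately show ?thesis
    unfolding D_set_def cone_region_def det2_eq_norm_coeffs entries_sum_squares_eq_norm_lin_coeff by simp
qed

lemma linear_lin_coeff: "linear lin_coeff"
  by (rule linearI) (simp_all add: lin_coeff_def complex_eq_iff field_simps)

lemma linear_antilin_coeff: "linear antilin_coeff"
  by (rule linearI) (simp_all add: antilin_coeff_def complex_eq_iff field_simps)

lemma continuous_on_lin_coeff: "continuous_on S lin_coeff"
  and continuous_on_antilin_coeff: "continuous_on S antilin_coeff"
  using linear_lin_coeff linear_antilin_coeff
  by (auto intro: linear_continuous_on linear_conv_bounded_linear[THEN iffD1])

lemma borel_measurable_lin_coeff [measurable]: "lin_coeff \<in> borel_measurable borel"
  and borel_measurable_antilin_coeff [measurable]: "antilin_coeff \<in> borel_measurable borel"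
  by (simp_all add: borel_measurable_continuous_onI continuous_on_lin_coeff continuous_on_antilin_coeff)

lemma vimage_cone_region: "f -` cone_region z w R c = cone_region (z \<circ> f) (w \<circ> f) R c"
  by (auto simp: cone_region_def)

lemma cone_region_zero [simp]: "cone_region z w R 0 = {}"
  by (simp add: cone_region_def)

lemma cone_region_borel [measurable]:
  assumes [measurable]: "z \<in> borel_measurable borel" "w \<in> borel_measurable borel"
  shows "cone_region z w R c \<in> sets borel"
  unfolding cone_region_def by measurable

lemma bounded_cone_region:
  fixes z w :: "'a::real_normed_vector \<Rightarrow> complex"
  assumes "\<And>x. norm x \<le> K * (cmod (z x) + cmod (w x))"
  shows "bounded (cone_region z w R c)"
proof -
  have "norm x \<le> \<bar>K\<bar> * (\<bar>R\<bar> + \<bar>c\<bar> * \<bar>R\<bar>)" if "x \<in> cone_region z w R c" for x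
  proof -
    have z: "cmod (z x) \<le> \<bar>R\<bar>"
      using that norm_ge_zero[of "z x"] unfolding cone_region_def by auto
    have "cmod (w x) \<le> \<bar>c\<bar> * cmod (z x)"
      using that mult_right_mono[OF abs_ge_self[of c] norm_ge_zero[of "z x"]]
      by (simp add: cone_region_def)
    also have "\<dots> \<le> \<bar>c\<bar> * \<bar>R\<bar>"
      using z by (simp add: mult_left_mono)
    finally have "cmod (z x) + cmod (w x) \<le> \<bar>R\<bar> + \<bar>c\<bar> * \<bar>R\<bar>"
      using z by argo
    then have "\<bar>K\<bar> * (cmod (z x) + cmod (w x)) \<le> \<bar>K\<bar> * (\<bar>R\<bar> + \<bar>c\<bar> * \<bar>R\<bar>)"
      by (rule mult_left_mono) simp
    moreover have "K * (cmod (z x) + cmod (w x)) \<le> \<bar>K\<bar> * (cmod (z x) + cmod (w x))"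
      by (rule mult_right_mono) simp_all
    ultimately show ?thesis
      using assms[of x] by argo
  qed
  then show ?thesis
    unfolding bounded_iff by blast
qed

lemma norm_le_norm_coeffs: "norm A \<le> 2 * (cmod (lin_coeff A) + cmod (antilin_coeff A))"
proof -
  have "(norm A)\<^sup>2 = 2 * ((cmod (lin_coeff A))\<^sup>2 + (cmod (antilin_coeff A))\<^sup>2)"
    by (simp add: norm_vec_def L2_set_def sum_2 cmod_power2 lin_coeff_def antilin_coeff_def)
      (simp add: power2_eq_square field_simps)
  also have "\<dots> \<le> (2 * (cmod (lin_coeff A) + cmod (antilin_coeff A)))\<^sup>2"
    by (simp add: power2_eq_square algebra_simps)
  finally show ?thesis
    by (rule power2_le_imp_le) simp
qed

lemma inner_basis_iso:
  fixes \<psi> :: "'a::euclidean_space \<Rightarrow> 'b::euclidean_space"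
  assumes lin: "linear \<psi>" and inj: "inj_on \<psi> Basis" and im: "\<psi> ` Basis = Basis"
    and b: "b \<in> Basis"
  shows "\<psi> x \<bullet> \<psi> b = x \<bullet> b"
proof -
  have "\<psi> x = (\<Sum>c\<in>Basis. (x \<bullet> c) *\<^sub>R \<psi> c)"
    by (metis (no_types, lifting) euclidean_representation lin linear_scale linear_sum sum.cong)
  then have "\<psi> x \<bullet> \<psi> b = (\<Sum>c\<in>Basis. (x \<bullet> c) * (\<psi> c \<bullet> \<psi> b))"
    by (simp add: inner_sum_left)
  also have "\<dots> = (\<Sum>c\<in>Basis. (x \<bullet> c) * (if c = b then 1 else 0))"
  proof (rule sum.cong)
    fix c :: 'a assume c: "c \<in> Basis"
    have "\<psi> c \<in> Basis" "\<psi> b \<in> Basis"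
      using c b im by auto
    moreover have "\<psi> c = \<psi> b \<longleftrightarrow> c = b"
      using inj c b by (auto dest: inj_onD)
    ultimately show "(x \<bullet> c) * (\<psi> c \<bullet> \<psi> b) = (x \<bullet> c) * (if c = b then 1 else 0)"
      by (simp add: inner_Basis)
  qed simp
  also have "\<dots> = x \<bullet> b"
    using b by (simp add: if_distrib sum.delta cong: if_cong)
  finally show ?thesis .
qed

lemma lborel_basis_iso:
  fixes \<psi> :: "'a::euclidean_space \<Rightarrow> 'b::euclidean_space"
  assumes lin: "linear \<psi>" and inj: "inj_on \<psi> Basis" and im: "\<psi> ` Basis = Basis"
  shows "distr lborel borel \<psi> = lborel"
proof -
  have meas: "\<psi> \<in> borel_measurable borel"
    using lin by (intro borel_measurable_continuous_onI linear_continuous_on linear_conv_bounded_linear[THEN iffD1])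
  define T where "T l = (\<Sum>b\<in>Basis. (l \<bullet> \<psi> b) *\<^sub>R b)" for l :: 'b
  have T_inner: "T l \<bullet> b = l \<bullet> \<psi> b" if "b \<in> Basis" for l b
    using that unfolding T_def by (simp add: inner_sum_left inner_Basis if_distrib sum.delta cong: if_cong)
  have vimage_box: "\<psi> -` box l u = box (T l) (T u)" for l u
  proof -
    have "x \<in> \<psi> -` box l u \<longleftrightarrow> (\<forall>b'\<in>\<psi> ` Basis. l \<bullet> b' < \<psi> x \<bullet> b' \<and> \<psi> x \<bullet> b' < u \<bullet> b')" for x
      unfolding im by (simp add: mem_box)
    also have "\<dots>x \<longleftrightarrow> x \<in> box (T l) (T u)" for x
      by (simp add: mem_box T_inner inner_basis_iso[OF assms])
    finally show ?thesis by auto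
  qed
  show ?thesis
  proof (rule lborel_eqI[symmetric])
    fix l u :: 'b assume le: "\<And>b. b \<in> Basis \<Longrightarrow> l \<bullet> b \<le> u \<bullet> b"
    have "emeasure (distr lborel borel \<psi>) (box l u) = emeasure lborel (box (T l) (T u))"
      using meas by (simp add: emeasure_distr vimage_box)
    also have "\<dots> = (\<Prod>b\<in>Basis. (T u - T l) \<bullet> b)"
      using le im by (intro emeasure_lborel_box) (auto simp: T_inner)
    also have "\<dots> = (\<Prod>b\<in>Basis. (u - l) \<bullet> \<psi> b)"
      by (intro arg_cong[where f=ennreal] prod.cong) (auto simp: inner_diff_left T_inner)
    also have "\<dots> = (\<Prod>b\<in>\<psi> ` Basis. (u - l) \<bullet> b)"
      using inj by (simp add: prod.reindex)
    finally show "emeasure (distr lborel borel \<psi>) (box l u) = (\<Prod>b\<in>Basis. (u - l) \<bullet> b)"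
      unfolding im .
  qed simp
qed

lemma measure_linear_vimage:
  fixes f :: "real^'n::{finite,wellorder} \<Rightarrow> real^'n::_"
  assumes "linear f" "surj f" "f -` S \<in> lmeasurable"
  shows "measure lebesgue S = \<bar>det (matrix f)\<bar> * measure lebesgue (f -` S)"
  using measure_linear_image[OF assms(1,3)] surj_image_vimage_eq[OF assms(2)] by simp

text \<open>Change of variables for linear maps (\<open>measure_linear_image\<close>) is only available
  on \<open>real^'n\<close>, so volumes of sets of matrices are computed in \<open>real^4\<close>.\<close>

definition matrix_of_vec4 :: "real^4 \<Rightarrow> real^2^2" where
  "matrix_of_vec4 x = vector [vector [x$1, x$2], vector [x$3, x$4]]"

lemma matrix_of_vec4_nth [simp]:
  "matrix_of_vec4 x $ 1 $ 1 = x$1" "matrix_of_vec4 x $ 1 $ 2 = x$2"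
  "matrix_of_vec4 x $ 2 $ 1 = x$3" "matrix_of_vec4 x $ 2 $ 2 = x$4"
  by (simp_all add: matrix_of_vec4_def)

lemma linear_matrix_of_vec4: "linear matrix_of_vec4"
  by (rule linearI) (simp_all add: vec_eq_iff forall_2)

lemma borel_measurable_matrix_of_vec4 [measurable]: "matrix_of_vec4 \<in> borel_measurable borel"
  using linear_matrix_of_vec4
  by (intro borel_measurable_continuous_onI linear_continuous_on linear_conv_bounded_linear[THEN iffD1])

lemma matrix_of_vec4_Basis: "matrix_of_vec4 ` Basis = Basis"
proof -
  have "matrix_of_vec4 (axis 1 1) = axis 1 (axis 1 1)" "matrix_of_vec4 (axis 2 1) = axis 1 (axis 2 1)"
       "matrix_of_vec4 (axis 3 1) = axis 2 (axis 1 1)" "matrix_of_vec4 (axis 4 1) = axis 2 (axis 2 1)"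
    by (simp_all add: vec_eq_iff forall_2 axis_def)
  then show ?thesis
    by (auto simp: Basis_vec_def UNIV_2 UNIV_4)
qed

lemma inj_matrix_of_vec4: "inj matrix_of_vec4"
proof (rule injI)
  fix x y assume "matrix_of_vec4 x = matrix_of_vec4 y"
  then show "x = y"
    by (simp add: vec_eq_iff forall_2 forall_4)
qed

lemma measure_lborel_vimage_matrix_of_vec4:
  assumes "S \<in> sets borel"
  shows "measure lborel (matrix_of_vec4 -` S) = measure lborel S"
proof -
  have "measure lborel S = measure (distr lborel borel matrix_of_vec4) S"
    using linear_matrix_of_vec4 inj_on_subset[OF inj_matrix_of_vec4] matrix_of_vec4_Basis
    by (simp add: lborel_basis_iso)
  also have "\<dots> = measure lborel (matrix_of_vec4 -` S)"
    using assms by (simp add: measure_distr)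
  finally show ?thesis ..
qed

definition complex_of_12 :: "real^4 \<Rightarrow> complex" where
  "complex_of_12 y = Complex (y$1) (y$2)"

definition complex_of_34 :: "real^4 \<Rightarrow> complex" where
  "complex_of_34 y = Complex (y$3) (y$4)"

lemma borel_measurable_complex_of_12 [measurable]: "complex_of_12 \<in> borel_measurable borel"
  and borel_measurable_complex_of_34 [measurable]: "complex_of_34 \<in> borel_measurable borel"
  unfolding complex_of_12_def complex_of_34_def Complex_eq by measurable

lemma norm_le_complex_of_12_34: "norm y \<le> cmod (complex_of_12 y) + cmod (complex_of_34 y)"
proof -
  have "(norm y)\<^sup>2 = (cmod (complex_of_12 y))\<^sup>2 + (cmod (complex_of_34 y))\<^sup>2"
    by (simp add: norm_vec_def L2_set_def sum_4 cmod_power2 complex_of_12_def complex_of_34_def)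
  also have "\<dots> \<le> (cmod (complex_of_12 y) + cmod (complex_of_34 y))\<^sup>2"
    by (simp add: power2_eq_square algebra_simps)
  finally show ?thesis
    by (rule power2_le_imp_le) simp
qed

lemma lmeasurable_cone_region_12_34:
  "cone_region complex_of_12 complex_of_34 R c \<in> lmeasurable"
  using norm_le_complex_of_12_34
  by (intro bounded_set_imp_lmeasurable bounded_cone_region[where K = 1]) simp_all

definition entries_of_coeffs :: "real^4 \<Rightarrow> real^4" where
  "entries_of_coeffs y = (\<chi> i. if i = 1 then y$1 + y$3 else if i = 2 then y$4 - y$2
     else if i = 3 then y$2 + y$4 else y$1 - y$3)"

lemma entries_of_coeffs_nth [simp]:
  "entries_of_coeffs y $ 1 = y$1 + y$3" "entries_of_coeffs y $ 2 = y$4 - y$2"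
  "entries_of_coeffs y $ 3 = y$2 + y$4" "entries_of_coeffs y $ 4 = y$1 - y$3"
  by (simp_all add: entries_of_coeffs_def)

lemma lin_coeff_entries_of_coeffs: "lin_coeff (matrix_of_vec4 (entries_of_coeffs y)) = complex_of_12 y"
  and antilin_coeff_entries_of_coeffs: "antilin_coeff (matrix_of_vec4 (entries_of_coeffs y)) = complex_of_34 y"
  by (simp_all add: lin_coeff_def antilin_coeff_def complex_of_12_def complex_of_34_def)

lemma linear_entries_of_coeffs: "linear entries_of_coeffs"
  by (rule linearI) (simp_all add: vec_eq_iff forall_4 algebra_simps)

lemma surj_entries_of_coeffs: "surj entries_of_coeffs"
proof (rule surjI)
  fix x :: "real^4"
  let ?y = "\<chi> i::4. if i = 1 then (x$1 + x$4) / 2 else if i = 2 then (x$3 - x$2) / 2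
    else if i = 3 then (x$1 - x$4) / 2 else (x$2 + x$3) / 2"
  show "entries_of_coeffs ?y = x"
    by (simp add: vec_eq_iff forall_4 field_simps)
qed

lemma measure_cone_region_coeffs:
  "measure lborel (cone_region lin_coeff antilin_coeff R c)
     = \<bar>det (matrix entries_of_coeffs)\<bar> * measure lborel (cone_region complex_of_12 complex_of_34 R c)"
proof -
  let ?S = "matrix_of_vec4 -` cone_region lin_coeff antilin_coeff R c"
  have "entries_of_coeffs -` ?S = cone_region complex_of_12 complex_of_34 R c"
    by (simp add: vimage_cone_region comp_def lin_coeff_entries_of_coeffs antilin_coeff_entries_of_coeffs)
  moreover have "?S \<in> sets borel"
    by (intro measurable_sets_borel[OF borel_measurable_matrix_of_vec4]) measurable
  ultimately show ?thesis
    using measure_linear_vimage[OF linear_entries_of_coeffs surj_entries_of_coeffs, of ?S]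
      lmeasurable_cone_region_12_34
    by (simp add: measure_lborel_vimage_matrix_of_vec4)
qed

definition scale_34 :: "real \<Rightarrow> real^4 \<Rightarrow> real^4" where
  "scale_34 c y = (\<chi> i. if i = 3 \<or> i = 4 then c * y$i else y$i)"

lemma linear_scale_34: "linear (scale_34 c)"
  by (rule linearI) (simp_all add: scale_34_def vec_eq_iff algebra_simps)

lemma surj_scale_34: "c \<noteq> 0 \<Longrightarrow> surj (scale_34 c)"
  by (rule surjI[of _ "scale_34 (1 / c)"]) (simp add: scale_34_def vec_eq_iff)

lemma matrix_scale_34: "matrix (scale_34 c) $ i $ j = (if i = j then (if i = 3 \<or> i = 4 then c else 1) else 0)"
  by (simp add: matrix_def scale_34_def axis_def)

lemma prod_4: "prod f (UNIV::4 set) = f 1 * f 2 * f 3 * f 4"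
  unfolding UNIV_4 by (simp add: ac_simps)

lemma det_scale_34: "det (matrix (scale_34 c)) = c\<^sup>2"
proof -
  have "det (matrix (scale_34 c)) = (\<Prod>i\<in>UNIV. matrix (scale_34 c) $ i $ i)"
    by (rule det_diagonal) (simp add: matrix_scale_34)
  also have "\<dots> = c\<^sup>2"
    unfolding prod_4 matrix_scale_34 by (simp add: power2_eq_square)
  finally show ?thesis .
qed

lemma complex_of_12_scale_34 [simp]: "complex_of_12 (scale_34 c y) = complex_of_12 y"
  by (simp add: scale_34_def complex_of_12_def)

lemma complex_of_34_scale_34 [simp]: "complex_of_34 (scale_34 c y) = of_real c * complex_of_34 y"
  by (simp add: scale_34_def complex_of_34_def complex_eq_iff)

lemma vimage_scale_34_cone_region:
  assumes "c > 0"
  shows "scale_34 (1 / c) -` cone_region complex_of_12 complex_of_34 R 1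
     = cone_region complex_of_12 complex_of_34 R c"
  using assms by (auto simp: cone_region_def norm_divide divide_less_eq mult.commute)

lemma measure_cone_region_12_34_scale:
  assumes "c > 0"
  shows "measure lborel (cone_region complex_of_12 complex_of_34 R c)
     = c\<^sup>2 * measure lborel (cone_region complex_of_12 complex_of_34 R 1)"
proof -
  let ?K = "cone_region complex_of_12 complex_of_34 R"
  have "measure lebesgue (?K 1)
      = \<bar>det (matrix (scale_34 (1 / c)))\<bar> * measure lebesgue (scale_34 (1 / c) -` ?K 1)"
    using assms lmeasurable_cone_region_12_34
    by (intro measure_linear_vimage linear_scale_34 surj_scale_34)
      (simp_all add: vimage_scale_34_cone_region)
  also have "\<dots> = measure lebesgue (?K c) / c\<^sup>2"
    using assms by (simp add: det_scale_34 vimage_scale_34_cone_region power_divide)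
  finally show ?thesis
    using assms by (simp add: field_simps)
qed

lemma measure_cone_region_coeffs_scale:
  assumes "c > 0"
  shows "measure lborel (cone_region lin_coeff antilin_coeff R c)
     = c\<^sup>2 * measure lborel (cone_region lin_coeff antilin_coeff R 1)"
  using measure_cone_region_12_34_scale[OF assms] by (simp add: measure_cone_region_coeffs)

section \<open>The mean deformation coefficient\<close>

lemma less_ratio_iff:
  fixes a b t :: real
  assumes "0 \<le> t" "t \<le> 1" "0 \<le> a" "0 \<le> b"
  shows "b < a \<and> t < (a - b) / (a + b) \<longleftrightarrow> b < (1 - t) / (1 + t) * a"
proof
  assume *: "b < a \<and> t < (a - b) / (a + b)"
  then have "0 < a + b"
    using assms by linarith
  with * have "t * (a + b) < a - b"
    by (simp add: field_simps)
  then show "b < (1 - t) / (1 + t) * a"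
    using assms by (simp add: field_simps)
next
  assume *: "b < (1 - t) / (1 + t) * a"
  then have "(1 + t) * b < (1 - t) * a"
    using assms by (simp add: field_simps)
  moreover have "b \<le> (1 + t) * b" "(1 - t) * a \<le> a"
    using assms mult_left_le_one_le[of a "1 - t"] by (simp_all add: mult_le_cancel_right1)
  ultimately have "b < a"
    by linarith
  then show "b < a \<and> t < (a - b) / (a + b)"
    using * assms by (simp add: field_simps)
qed

definition axis_ratio :: "real^2^2 \<Rightarrow> real" where
  "axis_ratio A = (cmod (lin_coeff A) - cmod (antilin_coeff A)) / (cmod (lin_coeff A) + cmod (antilin_coeff A))"

lemma borel_measurable_axis_ratio [measurable]: "axis_ratio \<in> borel_measurable borel"
  unfolding axis_ratio_def by measurable

lemma deformation_coeff_eq_axis_ratio: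
  "cmod (antilin_coeff A) \<le> cmod (lin_coeff A) \<Longrightarrow> deformation_coeff A = axis_ratio A"
  by (simp add: deformation_coeff_def axis_ratio_def major_semiaxis_eq minor_semiaxis_eq)

lemma axis_ratio_bounds:
  assumes "cmod (antilin_coeff A) < cmod (lin_coeff A)"
  shows "0 \<le> axis_ratio A \<and> axis_ratio A \<le> 1"
proof -
  have "0 < cmod (lin_coeff A) + cmod (antilin_coeff A)"
    using assms norm_ge_zero[of "antilin_coeff A"] by linarith
  then show ?thesis
    using assms by (simp add: axis_ratio_def divide_le_eq_1)
qed

lemma axis_ratio_superlevel_set:
  assumes "0 \<le> t" "t \<le> 1"
  shows "{A \<in> cone_region lin_coeff antilin_coeff R 1. t < axis_ratio A}
     = cone_region lin_coeff antilin_coeff R ((1 - t) / (1 + t))"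
  using less_ratio_iff[OF assms norm_ge_zero norm_ge_zero]
  by (auto simp: cone_region_def axis_ratio_def)

lemma emeasure_cone_region_coeffs_finite:
  "emeasure lborel (cone_region lin_coeff antilin_coeff R c) < \<infinity>"
  using norm_le_norm_coeffs
  by (intro emeasure_bounded_finite bounded_cone_region[where K = 2]) simp

lemma measure_cone_region_coeffs_pos:
  assumes "R > 0"
  shows "0 < measure lborel (cone_region lin_coeff antilin_coeff R 1)"
proof -
  define U where "U = {A. cmod (antilin_coeff A) < cmod (lin_coeff A) \<and> 2 * cmod (lin_coeff A) < R}"
  define A0 :: "real^2^2" where "A0 = mat (R / 4)"
  have "open U"
    unfolding U_def
    by (intro open_Collect_conj open_Collect_less continuous_intros continuous_on_lin_coeff
        continuous_on_antilin_coeff)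
  moreover have "A0 \<in> U"
    using assms by (simp add: U_def A0_def lin_coeff_def antilin_coeff_def mat_def cmod_def)
  ultimately obtain e where "e > 0" "ball A0 e \<subseteq> U"
    using open_contains_ball by blast
  moreover have "U \<subseteq> cone_region lin_coeff antilin_coeff R 1"
    by (auto simp: U_def cone_region_def)
  ultimately have "ball A0 e \<subseteq> cone_region lin_coeff antilin_coeff R 1"
    by blast
  then have "measure lborel (ball A0 e) \<le> measure lborel (cone_region lin_coeff antilin_coeff R 1)"
  proof (rule measure_mono_fmeasurable)
    show "cone_region lin_coeff antilin_coeff R 1 \<in> fmeasurable lborel"
      using emeasure_cone_region_coeffs_finite by (intro fmeasurableI) simp_all
  qed simp
  then show ?thesis
    using content_ball_pos[OF \<open>e > 0\<close>, of A0] by linarith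
qed

lemma emeasure_cone_region_coeffs_scale:
  assumes "c \<ge> 0"
  shows "emeasure lborel (cone_region lin_coeff antilin_coeff R c)
     = ennreal (c\<^sup>2 * measure lborel (cone_region lin_coeff antilin_coeff R 1))"
proof (cases "c = 0")
  case False
  have "emeasure lborel (cone_region lin_coeff antilin_coeff R c)
      = ennreal (measure lborel (cone_region lin_coeff antilin_coeff R c))"
    using emeasure_cone_region_coeffs_finite by (intro emeasure_eq_ennreal_measure) (simp add: less_top)
  also have "\<dots> = ennreal (c\<^sup>2 * measure lborel (cone_region lin_coeff antilin_coeff R 1))"
    using False assms measure_cone_region_coeffs_scale[of c R] by simp
  finally show ?thesis .
qed simp

lemma nn_integral_layer_cake:
  fixes f :: "'a::euclidean_space \<Rightarrow> real"
  assumes [measurable]: "S \<in> sets borel" "f \<in> borel_measurable borel"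
    and bounds: "\<And>x. x \<in> S \<Longrightarrow> 0 \<le> f x \<and> f x \<le> 1"
  shows "(\<integral>\<^sup>+x. indicator S x * ennreal (f x) \<partial>lborel) =
         (\<integral>\<^sup>+t. indicator {0..1} t * emeasure lborel {x\<in>S. t < f x} \<partial>lborel)"
proof -
  \<comment> \<open>Integrate the indicator of the region under the graph of \<open>f\<close> in both orders.\<close>
  define G where "G x t = (indicator {(x, t). x \<in> S \<and> 0 \<le> t \<and> t \<le> 1 \<and> t < f x} (x, t) :: ennreal)"
    for x and t :: real
  have G_measurable: "case_prod G \<in> borel_measurable (lborel \<Otimes>\<^sub>M lborel)"
    unfolding G_def by measurable
  have "indicator S x * ennreal (f x) = (\<integral>\<^sup>+t. G x t \<partial>lborel)" for x
  proof (cases "x \<in> S")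
    case True
    then have "G x = indicator {0..<f x}"
      using bounds[OF True] by (auto simp: G_def indicator_def)
    then show ?thesis
      using True bounds[OF True] by simp
  qed (simp add: G_def)
  moreover have "(\<integral>\<^sup>+x. G x t \<partial>lborel) = indicator {0..1} t * emeasure lborel {x\<in>S. t < f x}" for t
  proof -
    have "G x t = indicator {0..1} t * indicator {x\<in>S. t < f x} x" for x
      by (auto simp: G_def indicator_def)
    then show ?thesis
      by (simp add: nn_integral_cmult_indicator)
  qed
  ultimately show ?thesis
    using lborel_pair.Fubini'[OF G_measurable] by simp
qed

lemma nn_integral_ratio_square:
  "(\<integral>\<^sup>+t. ennreal (((1 - t) / (1 + t))\<^sup>2) * indicator {0..1} t \<partial>lborel) = ennreal (3 - 4 * ln 2)"
proof -
  define F where "F t = (1 + t) - 4 / (1 + t) - 4 * ln (1 + t)" for t :: real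
  have "DERIV F t :> ((1 - t) / (1 + t))\<^sup>2" if "t \<in> {0..1}" for t
  proof -
    have "1 + t > 0"
      using that by auto
    then have "DERIV F t :> 1 + 4 / (1 + t)\<^sup>2 - 4 / (1 + t)"
      unfolding F_def by (auto intro!: derivative_eq_intros simp: power2_eq_square field_simps)
    moreover have "1 + 4 / (1 + t)\<^sup>2 - 4 / (1 + t) = ((1 - t) / (1 + t))\<^sup>2"
      using \<open>1 + t > 0\<close> by (simp add: divide_simps power2_eq_square, simp add: algebra_simps)
    ultimately show ?thesis
      by simp
  qed
  then have "(\<integral>\<^sup>+t. ennreal (((1 - t) / (1 + t))\<^sup>2) * indicator {0..1} t \<partial>lborel) = F 1 - F 0"
    by (intro nn_integral_FTC_Icc) auto
  then show ?thesis
    by (simp add: F_def)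
qed

lemma four_ln_2_le_3: "4 * ln 2 \<le> (3::real)"
proof -
  have "2 \<le> 1 + 3/4 + (3/4)\<^sup>2 / (2::real)"
    by (simp add: power2_eq_square)
  also have "\<dots> \<le> exp (3/4)"
    by (rule exp_lower_Taylor_quadratic) simp
  finally have "ln 2 \<le> ln (exp (3/4 :: real))"
    by (subst ln_le_cancel_iff) auto
  then show ?thesis
    by simp
qed

lemma nn_integral_axis_ratio:
  "(\<integral>\<^sup>+A. indicator (cone_region lin_coeff antilin_coeff R 1) A * ennreal (axis_ratio A) \<partial>lborel)
     = ennreal (measure lborel (cone_region lin_coeff antilin_coeff R 1) * (3 - 4 * ln 2))"
  (is "?I = ennreal (?m * _)")
proof -
  let ?D = "cone_region lin_coeff antilin_coeff R 1"
  have "?I = (\<integral>\<^sup>+t. indicator {0..1} t * emeasure lborel {A\<in>?D. t < axis_ratio A} \<partial>lborel)"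
    using axis_ratio_bounds by (intro nn_integral_layer_cake) (simp_all add: cone_region_def)
  also have "\<dots> = (\<integral>\<^sup>+t. ennreal ?m * (ennreal (((1 - t) / (1 + t))\<^sup>2) * indicator {0..1} t) \<partial>lborel)"
    by (intro nn_integral_cong)
      (auto simp: indicator_def axis_ratio_superlevel_set emeasure_cone_region_coeffs_scale
        ennreal_mult' mult.commute)
  also have "\<dots> = ennreal ?m * ennreal (3 - 4 * ln 2)"
    by (simp add: nn_integral_cmult nn_integral_ratio_square)
  finally show ?thesis
    by (simp add: ennreal_mult')
qed

lemma has_integral_axis_ratio:
  "(axis_ratio has_integral measure lborel (cone_region lin_coeff antilin_coeff R 1) * (3 - 4 * ln 2))
     (cone_region lin_coeff antilin_coeff R 1)"
proof -
  let ?D = "cone_region lin_coeff antilin_coeff R 1"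
  have nonneg: "0 \<le> indicator ?D A * axis_ratio A" for A
    using axis_ratio_bounds[of A] by (simp add: indicator_def cone_region_def)
  have "(\<integral>\<^sup>+A. ennreal (indicator ?D A * axis_ratio A) \<partial>lborel)
      = (\<integral>\<^sup>+A. indicator ?D A * ennreal (axis_ratio A) \<partial>lborel)"
    by (intro nn_integral_cong) (simp add: indicator_def)
  then have "((\<lambda>A. indicator ?D A * axis_ratio A) has_integral measure lborel ?D * (3 - 4 * ln 2)) UNIV"
    using nonneg four_ln_2_le_3
    by (intro nn_integral_has_integral) (simp_all add: nn_integral_axis_ratio)
  then show ?thesis
    by (simp add: indicator_times_eq_if has_integral_restrict_UNIV)
qed

theorem theorem3p1:
  fixes R :: real
  assumes "R > 0"
  shows "integral (D_set R) deformation_coeff / measure lebesgue (D_set R) = 3 - 4 * ln 2"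
proof -
  let ?D = "cone_region lin_coeff antilin_coeff R 1"
  have "D_set R = ?D"
    using assms by (simp add: D_set_eq_cone_region)
  moreover have "integral ?D deformation_coeff = integral ?D axis_ratio"
    by (intro integral_cong deformation_coeff_eq_axis_ratio) (simp add: cone_region_def)
  moreover have "integral ?D axis_ratio = measure lborel ?D * (3 - 4 * ln 2)"
    using has_integral_axis_ratio by (rule integral_unique)
  ultimately show ?thesis
    using measure_cone_region_coeffs_pos[OF assms] by simp
qed

end
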